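(* Let $M=B\circ S$ with $S$ subsampling without replacement with batch size $q$, let the dataset relation be substitution $\simeq_\Delta$ and the batch relation be insertion/removal $\simeq_\pm$ with induced distance $d_\pm$. Then for every $\alpha>1$ and all datasets $x\simeq_\Delta x'$ of size $N$, $$\Lambda_\alpha(m_x\|m_{x'})\le\max_{y^{(1)}_1,y^{(1)}_2,y^{(2)}_1,y^{(2)}_2\in\mathbb Y}\Lambda_\alpha\big((1-w)b_{y^{(1)}_1}+w\,b_{y^{(1)}_2}\ \big\|\ (1-w)b_{y^{(2)}_1}+w\,b_{y^{(2)}_2}\big)$$ subject to $y^{(1)}_1=y^{(2)}_1$, $d_\pm(y^{(1)}_1,y^{(1)}_2)\le2$, $d_\pm(y^{(1)}_1,y^{(2)}_2)\le2$, $d_\pm(y^{(1)}_2,y^{(2)}_2)\le2$, where $w=q/N$.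
   Context: Finite set $\mathbb A$, datasets are subsets of $\mathbb A$ with more than $q$ elements; the batch space $\mathbb Y$ consists of subsets of size $q$ (of datasets). Subsampling without replacement: $s_x(y)=\binom{|x|}{q}^{-1}$ for $y\subseteq x$, $|y|=q$. $B$ assigns a density $b_y$ on $\mathbb R^D$ to each batch; $m_x=\sum_y b_y s_x(y)$. $x\simeq_\Delta x'$ iff $x'=(x\setminus\{a\})\cup\{a'\}$ with $a\in x$, $a'\notin x$. $y\simeq_\pm y'$ iff one is obtained from the other by inserting or removing one element; $d_\pm$ is the induced distance (length of shortest chain of neighbors, measured through arbitrary finite subsets of $\mathbb A$). $\Lambda_\alpha(p\|q)=\int p^\alpha q^{1-\alpha}dz$. *)

theory Defs
  imports "HOL-Analysis.Analysis"
begin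

definition batches :: "'a set \<Rightarrow> nat \<Rightarrow> 'a set set" where
  "batches A q = {y. y \<subseteq> A \<and> card y = q}"

definition subsample_prob :: "nat \<Rightarrow> 'a set \<Rightarrow> 'a set \<Rightarrow> real" where
  "subsample_prob q x y = (if y \<subseteq> x \<and> card y = q then 1 / real (card x choose q) else 0)"

definition mech_density ::
  "'a set \<Rightarrow> nat \<Rightarrow> ('a set \<Rightarrow> 'd \<Rightarrow> real) \<Rightarrow> 'a set \<Rightarrow> 'd \<Rightarrow> real" where
  "mech_density A q b x z = (\<Sum>y\<in>batches A q. b y z * subsample_prob q x y)"

definition subst_rel :: "'a set \<Rightarrow> 'a set \<Rightarrow> 'a set \<Rightarrow> bool" where
  "subst_rel A x x' \<longleftrightarrow> (\<exists>a a'. a \<in> x \<and> a' \<in> A \<and> a' \<notin> x \<and> x' = (x - {a}) \<union> {a'})"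

definition ins_rem_rel :: "'a set \<Rightarrow> 'a set \<Rightarrow> 'a set \<Rightarrow> bool" where
  "ins_rem_rel A y y' \<longleftrightarrow> y \<subseteq> A \<and> y' \<subseteq> A \<and>
     (\<exists>a\<in>A. (a \<notin> y \<and> y' = insert a y) \<or> (a \<in> y \<and> y' = y - {a}))"

definition d_pm :: "'a set \<Rightarrow> 'a set \<Rightarrow> 'a set \<Rightarrow> nat" where
  "d_pm A y y' = (LEAST n. (ins_rem_rel A ^^ n) y y')"

definition renyi_lambda :: "real \<Rightarrow> ('d::euclidean_space \<Rightarrow> real) \<Rightarrow> ('d \<Rightarrow> real) \<Rightarrow> ennreal" where
  "renyi_lambda \<alpha> p q = (\<integral>\<^sup>+ z. (if p z = 0 then 0 else if q z = 0 then \<infinity>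
       else ennreal (p z powr \<alpha> * q z powr (1 - \<alpha>))) \<partial>lborel)"

definition is_density :: "('d::euclidean_space \<Rightarrow> real) \<Rightarrow> bool" where
  "is_density p \<longleftrightarrow> p \<in> borel_measurable lborel \<and> (\<forall>z. 0 \<le> p z) \<and>
     (\<integral>\<^sup>+ z. ennreal (p z) \<partial>lborel) = 1"

end

theory Submission
  imports Defs
begin

text \<open>
  Write \<open>x = X \<union> {a}\<close> and \<open>x' = X \<union> {a'}\<close>. Drawing a \<open>q\<close>-subset \<open>y\<close> of \<open>X\<close> together with a
  uniform point \<open>t \<in> y\<close>, and with probability \<open>w = q/N\<close> replacing \<open>t\<close> by the new element \<open>c\<close>,
  reproduces uniform subsampling of \<open>X \<union> {c}\<close>. Hence \<open>m\<^sub>x\<close> and \<open>m\<^sub>x'\<close> are the same uniform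
  average over the pairs \<open>(y, t)\<close> of the mixtures \<open>(1 - w) b\<^sub>y + w b\<^bsub>y - t + a\<^esub>\<close> and
  \<open>(1 - w) b\<^sub>y + w b\<^bsub>y - t + a'\<^esub>\<close>, whose batches are pairwise within distance 2.
  The integrand \<open>p\<^sup>\<alpha> q\<^sup>1\<^sup>-\<^sup>\<alpha>\<close> is the perspective of the convex function \<open>s\<^sup>\<alpha>\<close>, so it is jointly
  subadditive and positively homogeneous; therefore \<open>\<Lambda>\<^sub>\<alpha>\<close> of the two averages is at most
  the average, hence the maximum, of \<open>\<Lambda>\<^sub>\<alpha>\<close> over the paired mixtures.
\<close>

lemma powr_convex_nonneg:
  assumes "p \<ge> 1"
  shows "convex_on {0::real..} (\<lambda>x. x powr p)"
proof -
  have scale: "(v * y) powr p \<le> v * y powr p" if "0 \<le> v" "v \<le> 1" "0 \<le> y" for v y :: real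
  proof -
    have "v powr p \<le> v"
      using that assms by (cases "v = 0") (auto intro: powr_le_one_le)
    then have "v powr p * y powr p \<le> v * y powr p"
      using that by (intro mult_right_mono) auto
    then show ?thesis
      using that by (simp add: powr_mult)
  qed
  show ?thesis
    unfolding convex_on_def
  proof (intro conjI ballI allI impI)
    fix x y u v :: real
    assume xy: "x \<in> {0..}" "y \<in> {0..}" and uv: "0 \<le> u" "0 \<le> v" "u + v = 1"
    consider "x = 0" | "y = 0" | "x > 0" "y > 0"
      using xy by fastforce
    then show "(u *\<^sub>R x + v *\<^sub>R y) powr p \<le> u * x powr p + v * y powr p"
    proof cases
      case 1 then show ?thesis using scale[of v y] xy uv by simp
    next
      case 2 then show ?thesis using scale[of u x] xy uv by simp
    next
      case 3 then show ?thesis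
        using powr_convex[OF assms] uv unfolding convex_on_def by simp
    qed
  qed (simp add: convex_real_interval)
qed

lemma convex_on_perspective_add_le:
  fixes f :: "real \<Rightarrow> real"
  assumes "convex_on C f" "p1 / q1 \<in> C" "p2 / q2 \<in> C" "q1 > 0" "q2 > 0"
  shows "(q1 + q2) * f ((p1 + p2) / (q1 + q2)) \<le> q1 * f (p1 / q1) + q2 * f (p2 / q2)"
proof -
  define t where "t = q2 / (q1 + q2)"
  have pos: "q1 + q2 > 0"
    using assms(4,5) by simp
  have t: "0 \<le> t" "t \<le> 1" "1 - t = q1 / (q1 + q2)"
    using assms(4,5) pos by (auto simp: t_def field_simps)
  have "(p1 + p2) / (q1 + q2) = (1 - t) *\<^sub>R (p1 / q1) + t *\<^sub>R (p2 / q2)"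
    using assms(4,5) unfolding t(3) unfolding t_def by (simp add: add_divide_distrib)
  then have "f ((p1 + p2) / (q1 + q2)) \<le> (1 - t) * f (p1 / q1) + t * f (p2 / q2)"
    using convex_onD[OF assms(1) t(1,2) assms(2,3)] by simp
  then have "(q1 + q2) * f ((p1 + p2) / (q1 + q2))
      \<le> (q1 + q2) * ((1 - t) * f (p1 / q1) + t * f (p2 / q2))"
    using assms(4,5) by (intro mult_left_mono) auto
  also have "\<dots> = q1 * f (p1 / q1) + q2 * f (p2 / q2)"
    using pos unfolding t(3) unfolding t_def by (simp add: distrib_left)
  finally show ?thesis .
qed

definition renyi_integrand :: "real \<Rightarrow> real \<Rightarrow> real \<Rightarrow> ennreal" where
  "renyi_integrand \<alpha> p q =
     (if p = 0 then 0 else if q = 0 then \<infinity> else ennreal (p powr \<alpha> * q powr (1 - \<alpha>)))"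

lemma renyi_lambda_eq_nn_integral:
  "renyi_lambda \<alpha> p q = (\<integral>\<^sup>+ z. renyi_integrand \<alpha> (p z) (q z) \<partial>lborel)"
  by (simp add: renyi_lambda_def renyi_integrand_def)

lemma borel_measurable_renyi_integrand [measurable]:
  assumes "p \<in> borel_measurable M" "q \<in> borel_measurable M"
  shows "(\<lambda>z. renyi_integrand \<alpha> (p z) (q z)) \<in> borel_measurable M"
  unfolding renyi_integrand_def using assms by measurable

lemma renyi_integrand_perspective:
  assumes "q > 0" "p \<ge> 0"
  shows "renyi_integrand \<alpha> p q = ennreal (q * (p / q) powr \<alpha>)"
  using assms by (auto simp: renyi_integrand_def powr_divide powr_diff)

lemma renyi_integrand_add_le:
  assumes "\<alpha> \<ge> 1" "p1 \<ge> 0" "p2 \<ge> 0" "q1 \<ge> 0" "q2 \<ge> 0"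
  shows "renyi_integrand \<alpha> (p1 + p2) (q1 + q2) \<le> renyi_integrand \<alpha> p1 q1 + renyi_integrand \<alpha> p2 q2"
proof (cases "q1 > 0 \<and> q2 > 0")
  case True
  have "renyi_integrand \<alpha> (p1 + p2) (q1 + q2)
      = ennreal ((q1 + q2) * ((p1 + p2) / (q1 + q2)) powr \<alpha>)"
    using assms True by (intro renyi_integrand_perspective) auto
  also have "\<dots> \<le> ennreal (q1 * (p1 / q1) powr \<alpha> + q2 * (p2 / q2) powr \<alpha>)"
    by (intro ennreal_leI convex_on_perspective_add_le[OF powr_convex_nonneg])
      (use assms True in auto)
  also have "\<dots> = renyi_integrand \<alpha> p1 q1 + renyi_integrand \<alpha> p2 q2"
    using assms True by (simp add: renyi_integrand_perspective ennreal_plus)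
  finally show ?thesis .
next
  case False
  then consider "q1 = 0" | "q2 = 0"
    using assms by fastforce
  then show ?thesis
    by cases (auto simp: renyi_integrand_def)
qed

lemma renyi_integrand_sum_le:
  assumes "\<alpha> \<ge> 1" "\<And>i. i \<in> I \<Longrightarrow> p i \<ge> 0" "\<And>i. i \<in> I \<Longrightarrow> q i \<ge> 0"
  shows "renyi_integrand \<alpha> (\<Sum>i\<in>I. p i) (\<Sum>i\<in>I. q i) \<le> (\<Sum>i\<in>I. renyi_integrand \<alpha> (p i) (q i))"
  using assms(2,3)
proof (induction I rule: infinite_finite_induct)
  case (insert i I)
  have "renyi_integrand \<alpha> (p i + (\<Sum>i\<in>I. p i)) (q i + (\<Sum>i\<in>I. q i))
      \<le> renyi_integrand \<alpha> (p i) (q i) + renyi_integrand \<alpha> (\<Sum>i\<in>I. p i) (\<Sum>i\<in>I. q i)"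
    using insert.prems by (intro renyi_integrand_add_le assms(1) sum_nonneg) auto
  also have "\<dots> \<le> renyi_integrand \<alpha> (p i) (q i) + (\<Sum>i\<in>I. renyi_integrand \<alpha> (p i) (q i))"
    using insert by (intro add_left_mono) auto
  finally show ?case
    using insert.hyps by simp
qed (simp_all add: renyi_integrand_def)

lemma renyi_integrand_cmult:
  assumes "c > 0" "p \<ge> 0" "q \<ge> 0"
  shows "renyi_integrand \<alpha> (c * p) (c * q) = ennreal c * renyi_integrand \<alpha> p q"
proof (cases "q = 0")
  case True
  then show ?thesis
    using assms by (simp add: renyi_integrand_def ennreal_mult_top)
next
  case False
  then have "q > 0"
    using assms(3) by simp
  then have "renyi_integrand \<alpha> (c * p) (c * q) = ennreal ((c * q) * ((c * p) / (c * q)) powr \<alpha>)"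
    using assms by (intro renyi_integrand_perspective) auto
  also have "\<dots> = ennreal c * ennreal (q * (p / q) powr \<alpha>)"
    using assms by (simp add: ennreal_mult mult.assoc)
  also have "\<dots> = ennreal c * renyi_integrand \<alpha> p q"
    using \<open>q > 0\<close> assms by (simp add: renyi_integrand_perspective)
  finally show ?thesis .
qed

lemma renyi_lambda_sum_le:
  assumes "\<alpha> \<ge> 1"
    and "\<And>i. i \<in> I \<Longrightarrow> p i \<in> borel_measurable lborel" "\<And>i. i \<in> I \<Longrightarrow> q i \<in> borel_measurable lborel"
    and "\<And>i z. i \<in> I \<Longrightarrow> p i z \<ge> 0" "\<And>i z. i \<in> I \<Longrightarrow> q i z \<ge> 0"
  shows "renyi_lambda \<alpha> (\<lambda>z. \<Sum>i\<in>I. p i z) (\<lambda>z. \<Sum>i\<in>I. q i z) \<le> (\<Sum>i\<in>I. renyi_lambda \<alpha> (p i) (q i))"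
proof -
  have "renyi_lambda \<alpha> (\<lambda>z. \<Sum>i\<in>I. p i z) (\<lambda>z. \<Sum>i\<in>I. q i z)
      \<le> (\<integral>\<^sup>+ z. (\<Sum>i\<in>I. renyi_integrand \<alpha> (p i z) (q i z)) \<partial>lborel)"
    unfolding renyi_lambda_eq_nn_integral
    using assms by (intro nn_integral_mono renyi_integrand_sum_le) auto
  also have "\<dots> = (\<Sum>i\<in>I. renyi_lambda \<alpha> (p i) (q i))"
    unfolding renyi_lambda_eq_nn_integral using assms(2,3) by (intro nn_integral_sum) auto
  finally show ?thesis .
qed

lemma renyi_lambda_cmult:
  assumes "c > 0" "p \<in> borel_measurable lborel" "q \<in> borel_measurable lborel"
    and "\<And>z. p z \<ge> 0" "\<And>z. q z \<ge> 0"
  shows "renyi_lambda \<alpha> (\<lambda>z. c * p z) (\<lambda>z. c * q z) = ennreal c * renyi_lambda \<alpha> p q"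
  unfolding renyi_lambda_eq_nn_integral
  using assms by (simp add: renyi_integrand_cmult nn_integral_cmult)

lemma renyi_lambda_average_le:
  assumes "\<alpha> \<ge> 1"
    and "\<And>i. i \<in> I \<Longrightarrow> p i \<in> borel_measurable lborel" "\<And>i. i \<in> I \<Longrightarrow> q i \<in> borel_measurable lborel"
    and "\<And>i z. i \<in> I \<Longrightarrow> p i z \<ge> 0" "\<And>i z. i \<in> I \<Longrightarrow> q i z \<ge> 0"
    and "\<And>i. i \<in> I \<Longrightarrow> renyi_lambda \<alpha> (p i) (q i) \<le> M"
  shows "renyi_lambda \<alpha> (\<lambda>z. (\<Sum>i\<in>I. p i z) / card I) (\<lambda>z. (\<Sum>i\<in>I. q i z) / card I) \<le> M"
proof (cases "card I = 0")
  case True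
  then show ?thesis
    by (simp add: renyi_lambda_eq_nn_integral renyi_integrand_def)
next
  case False
  define n where "n = real (card I)"
  have n: "n > 0"
    using False by (simp add: n_def)
  have "renyi_lambda \<alpha> (\<lambda>z. (\<Sum>i\<in>I. p i z) / n) (\<lambda>z. (\<Sum>i\<in>I. q i z) / n)
      = ennreal (1 / n) * renyi_lambda \<alpha> (\<lambda>z. \<Sum>i\<in>I. p i z) (\<lambda>z. \<Sum>i\<in>I. q i z)"
    using renyi_lambda_cmult[of "1 / n" "\<lambda>z. \<Sum>i\<in>I. p i z" "\<lambda>z. \<Sum>i\<in>I. q i z" \<alpha>] n assms
    by (simp add: sum_nonneg)
  also have "\<dots> \<le> ennreal (1 / n) * (\<Sum>i\<in>I. M)"
    using assms by (intro mult_left_mono order_trans[OF renyi_lambda_sum_le sum_mono]) auto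
  also have "\<dots> = M"
    using n
    by (simp add: n_def ennreal_of_nat_eq_real_of_nat ennreal_mult[symmetric] mult.assoc[symmetric])
  finally show ?thesis
    by (simp add: n_def)
qed

lemma finite_batches: "finite X \<Longrightarrow> finite (batches X q)"
  by (rule finite_subset[of _ "Pow X"]) (auto simp: batches_def)

lemma batches_mono: "X \<subseteq> Y \<Longrightarrow> batches X q \<subseteq> batches Y q"
  by (auto simp: batches_def)

lemma card_batches: "finite X \<Longrightarrow> card (batches X q) = card X choose q"
  unfolding batches_def by (rule n_subsets)

lemma mech_density_eq_average:
  assumes "finite A" "x \<subseteq> A"
  shows "mech_density A q b x z = (\<Sum>y\<in>batches x q. b y z) / card (batches x q)"
proof -
  have fin: "finite x"
    using assms finite_subset by blast
  have "mech_density A q b x z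
      = (\<Sum>y\<in>batches A q. if y \<in> batches x q then b y z / card (batches x q) else 0)"
    unfolding mech_density_def subsample_prob_def card_batches[OF fin]
    by (intro sum.cong) (auto simp: batches_def)
  also have "\<dots> = (\<Sum>y\<in>batches x q. b y z / card (batches x q))"
    using batches_mono[OF assms(2)] finite_batches[OF assms(1)]
    by (simp add: sum.If_cases Int_absorb1)
  finally show ?thesis
    by (simp add: sum_divide_distrib)
qed

lemma batches_insert_Suc:
  assumes "finite X" "c \<notin> X"
  shows "batches (insert c X) (Suc k) = batches X (Suc k) \<union> insert c ` batches X k"
proof (intro equalityI subsetI)
  fix y assume y: "y \<in> batches (insert c X) (Suc k)"
  show "y \<in> batches X (Suc k) \<union> insert c ` batches X k"
  proof (cases "c \<in> y")
    case True
    then have "y - {c} \<in> batches X k" "y = insert c (y - {c})"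
      using y assms by (auto simp: batches_def card_Diff_singleton_if)
    then show ?thesis by blast
  qed (use y in \<open>auto simp: batches_def\<close>)
next
  fix y assume "y \<in> batches X (Suc k) \<union> insert c ` batches X k"
  then show "y \<in> batches (insert c X) (Suc k)"
    using assms by (auto simp: batches_def card_insert_if finite_subset)
qed

lemma sum_batches_insert_Suc:
  assumes "finite X" "c \<notin> X"
  shows "(\<Sum>y\<in>batches (insert c X) (Suc k). f y)
    = (\<Sum>y\<in>batches X (Suc k). f y) + (\<Sum>u\<in>batches X k. f (insert c u))"
proof -
  have "inj_on (insert c) (batches X k)"
    using assms(2) by (intro inj_onI) (auto simp: batches_def insert_ident)
  moreover have "batches X (Suc k) \<inter> insert c ` batches X k = {}"
    using assms(2) by (auto simp: batches_def)
  ultimately show ?thesis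
    using assms by (simp add: batches_insert_Suc sum.union_disjoint sum.reindex finite_batches)
qed

definition pointed_batches :: "'a set \<Rightarrow> nat \<Rightarrow> ('a set \<times> 'a) set" where
  "pointed_batches X q = (SIGMA y:batches X q. y)"

lemma sum_pointed_batches_fst:
  assumes "finite X"
  shows "(\<Sum>(y, t)\<in>pointed_batches X q. f y) = of_nat q * (\<Sum>y\<in>batches X q. f y)"
proof -
  have "(\<Sum>(y, t)\<in>pointed_batches X q. f y) = (\<Sum>y\<in>batches X q. \<Sum>t\<in>y. f y)"
    unfolding pointed_batches_def using assms
    by (intro sum.Sigma[symmetric] finite_batches) (auto simp: batches_def intro: finite_subset)
  also have "\<dots> = (\<Sum>y\<in>batches X q. of_nat q * f y)"
    by (intro sum.cong) (auto simp: batches_def)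
  finally show ?thesis
    by (simp add: sum_distrib_left)
qed

lemma sum_pointed_batches_remove:
  assumes "finite X"
  shows "(\<Sum>(y, t)\<in>pointed_batches X (Suc k). f (y - {t}))
    = of_nat (card X - k) * (\<Sum>u\<in>batches X k. f u)"
proof -
  have bij: "bij_betw (\<lambda>(u, t). (insert t u, t))
      (SIGMA u:batches X k. X - u) (pointed_batches X (Suc k))"
    using assms
    by (intro bij_betw_byWitness[where f' = "\<lambda>(y, t). (y - {t}, t)"])
       (auto simp: pointed_batches_def batches_def card_insert_if card_Diff_singleton_if
          finite_subset)
  have "(\<Sum>(y, t)\<in>pointed_batches X (Suc k). f (y - {t}))
      = (\<Sum>(u, t)\<in>(SIGMA u:batches X k. X - u). f u)"
    by (subst sum.reindex_bij_betw[OF bij, symmetric]) (auto intro!: sum.cong)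
  also have "\<dots> = (\<Sum>u\<in>batches X k. \<Sum>t\<in>X - u. f u)"
    using assms by (intro sum.Sigma[symmetric] finite_batches) auto
  also have "\<dots> = (\<Sum>u\<in>batches X k. of_nat (card X - k) * f u)"
    using assms by (intro sum.cong) (auto simp: batches_def card_Diff_subset finite_subset)
  finally show ?thesis
    by (simp add: sum_distrib_left)
qed

lemma mech_density_insert_mixture:
  assumes "finite A" "insert c X \<subseteq> A" "c \<notin> X" "0 < q" "q \<le> card X"
  defines "w \<equiv> real q / real (card (insert c X))"
  shows "mech_density A q b (insert c X) z
    = (\<Sum>(y, t)\<in>pointed_batches X q. (1 - w) * b y z + w * b (insert c (y - {t})) z)
        / card (pointed_batches X q)"
proof -
  obtain k where q: "q = Suc k"
    using assms(4) gr0_implies_Suc by blast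
  have fin: "finite X"
    using assms(1,2) by (meson finite_insert infinite_super)
  define S1 where "S1 = (\<Sum>y\<in>batches X q. b y z)"
  define S2 where "S2 = (\<Sum>u\<in>batches X k. b (insert c u) z)"
  define k1 where "k1 = real (card (batches X q))"
  define k2 where "k2 = real (card (batches X k))"
  define P where "P = real (card (pointed_batches X q))"
  define m where "m = real (card X - k)"
  have m: "m > 0" "real (card (insert c X)) = m + q"
    using assms(3,5) fin by (auto simp: m_def q)
  have P: "P = q * k1" "P = m * k2"
    using sum_pointed_batches_fst[OF fin, where q = q and f = "\<lambda>_. 1::real"]
      sum_pointed_batches_remove[OF fin, where k = k and f = "\<lambda>_. 1::real"]
    by (simp_all add: P_def k1_def k2_def m_def q)
  have "mech_density A q b (insert c X) z = (S1 + S2) / (k1 + k2)"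
    unfolding mech_density_eq_average[OF assms(1,2)] q
    using sum_batches_insert_Suc[OF fin assms(3), where k = k and f = "\<lambda>y. b y z"]
      sum_batches_insert_Suc[OF fin assms(3), where k = k and f = "\<lambda>_. 1::real"]
    by (simp add: S1_def S2_def k1_def k2_def q)
  also have "\<dots> = ((1 - w) * (q * S1) + w * (m * S2)) / P"
  proof -
    have w: "1 - w = m / (m + q)" "w = q / (m + q)"
      using m assms(4) by (auto simp: w_def field_simps)
    have k: "k1 + k2 = P * (m + q) / (q * m)"
      using P m(1) assms(4) by (simp add: field_simps)
    show ?thesis
      unfolding w(1) unfolding w(2) k
      by (simp add: divide_divide_eq_right add_divide_distrib[symmetric] algebra_simps)
  qed
  also have "(1 - w) * (q * S1) + w * (m * S2)
      = (1 - w) * (\<Sum>(y, t)\<in>pointed_batches X q. b y z)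
        + w * (\<Sum>(y, t)\<in>pointed_batches X q. b (insert c (y - {t})) z)"
    using sum_pointed_batches_fst[OF fin, where q = q and f = "\<lambda>y. b y z"]
      sum_pointed_batches_remove[OF fin, where k = k and f = "\<lambda>u. b (insert c u) z"]
    by (simp add: S1_def S2_def m_def q)
  also have "\<dots> = (\<Sum>(y, t)\<in>pointed_batches X q. (1 - w) * b y z + w * b (insert c (y - {t})) z)"
    by (simp add: sum.distrib sum_distrib_left case_prod_unfold)
  finally show ?thesis
    by (simp add: P_def)
qed

lemma d_pm_insert_insert_le_2:
  assumes "u \<subseteq> A" "c \<in> A" "c' \<in> A" "c \<notin> u" "c' \<notin> u"
  shows "d_pm A (insert c u) (insert c' u) \<le> 2"
proof -
  have "ins_rem_rel A (insert c u) u"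
    using assms unfolding ins_rem_rel_def by (intro conjI bexI[of _ c]) auto
  moreover have "ins_rem_rel A u (insert c' u)"
    using assms unfolding ins_rem_rel_def by (intro conjI bexI[of _ c']) auto
  ultimately have "(ins_rem_rel A ^^ 2) (insert c u) (insert c' u)"
    by (auto simp: numeral_2_eq_2)
  then show ?thesis
    unfolding d_pm_def by (rule Least_le)
qed

lemma d_pm_self: "d_pm A y y = 0"
  unfolding d_pm_def by (rule Least_eq_0) simp

lemma pointed_batches_swap:
  assumes "(y, t) \<in> pointed_batches X q" "insert c X \<subseteq> A" "c \<notin> X"
  shows "y \<in> batches A q" "insert c (y - {t}) \<in> batches A q" "d_pm A y (insert c (y - {t})) \<le> 2"
proof -
  have y: "y \<subseteq> X" "card y = q" "t \<in> y"
    using assms(1) by (auto simp: pointed_batches_def batches_def)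
  then show "y \<in> batches A q"
    using assms(2) by (auto simp: batches_def)
  show "insert c (y - {t}) \<in> batches A q"
    using y assms(2,3) card_gt_0_iff[of y]
    by (cases "finite y") (auto simp: batches_def card_insert_if card_Diff_singleton_if)
  have "d_pm A (insert t (y - {t})) (insert c (y - {t})) \<le> 2"
    using y assms(2,3) by (intro d_pm_insert_insert_le_2) auto
  then show "d_pm A y (insert c (y - {t})) \<le> 2"
    using y(3) by (simp add: insert_absorb)
qed

lemma mech_density_batch_size_0:
  assumes "finite A" "x \<subseteq> A"
  shows "mech_density A 0 b x = b {}"
proof -
  have "batches x 0 = {{}}"
    using assms by (auto simp: batches_def finite_subset)
  then show ?thesis
    by (simp add: mech_density_eq_average[OF assms] fun_eq_iff)
qed

lemma renyi_lambda_mech_density_subst_le: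
  assumes "finite A" "\<alpha> \<ge> 1" "\<And>y. y \<in> batches A q \<Longrightarrow> is_density (b y)"
    and "insert a X \<subseteq> A" "insert a' X \<subseteq> A" "a \<notin> X" "a' \<notin> X" "0 < q" "q \<le> card X"
  defines "w \<equiv> real q / real (card (insert a X))"
  assumes "\<And>y t. (y, t) \<in> pointed_batches X q \<Longrightarrow>
      renyi_lambda \<alpha> (\<lambda>z. (1 - w) * b y z + w * b (insert a (y - {t})) z)
        (\<lambda>z. (1 - w) * b y z + w * b (insert a' (y - {t})) z) \<le> M"
  shows "renyi_lambda \<alpha> (mech_density A q b (insert a X)) (mech_density A q b (insert a' X)) \<le> M"
proof -
  define F where "F c = (\<lambda>(y, t) z. (1 - w) * b y z + w * b (insert c (y - {t})) z)" for c
  have fin: "finite X"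
    using assms(1,4) by (meson finite_insert infinite_super)
  have w: "0 \<le> w" "w \<le> 1"
    using assms(6,9) fin by (auto simp: w_def)
  have mixture: "mech_density A q b (insert c X)
      = (\<lambda>z. (\<Sum>i\<in>pointed_batches X q. F c i z) / card (pointed_batches X q))"
    if "insert c X \<subseteq> A" "c \<notin> X" for c
    using mech_density_insert_mixture[OF assms(1) that assms(8,9), of b] that assms(6) fin
    by (auto simp: F_def w_def case_prod_unfold)
  have dens: "b y \<in> borel_measurable lborel" "b y z \<ge> 0" if "y \<in> batches A q" for y z
    using assms(3)[OF that] by (auto simp: is_density_def)
  have F: "F c i \<in> borel_measurable lborel" "F c i z \<ge> 0"
    if "i \<in> pointed_batches X q" "insert c X \<subseteq> A" "c \<notin> X" for i c z
    using pointed_batches_swap[of "fst i" "snd i" X q c A] dens that w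
    by (auto simp: F_def case_prod_unfold)
  show ?thesis
    unfolding mixture[OF assms(4,6)] mixture[OF assms(5,7)]
    using assms(4-7) assms(11) F by (intro renyi_lambda_average_le assms(2)) (auto simp: F_def)
qed

theorem mainTheorem12:
  fixes A :: "'a set" and q :: nat and b :: "'a set \<Rightarrow> 'd::euclidean_space \<Rightarrow> real"
    and \<alpha> :: real and x x' :: "'a set"
  assumes "finite A"
    and dens: "\<And>y. y \<in> batches A q \<Longrightarrow> is_density (b y)"
    and "\<alpha> > 1"
    and "x \<subseteq> A" and "card x > q"
    and "subst_rel A x x'"
  shows "renyi_lambda \<alpha> (mech_density A q b x) (mech_density A q b x') \<le>
    (let w = real q / real (card x) in
     Max ((\<lambda>(y11, y12, y21, y22). renyi_lambda \<alpha>
              (\<lambda>z. (1 - w) * b y11 z + w * b y12 z)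
              (\<lambda>z. (1 - w) * b y21 z + w * b y22 z)) `
          {(y11, y12, y21, y22). y11 \<in> batches A q \<and> y12 \<in> batches A q \<and>
             y21 \<in> batches A q \<and> y22 \<in> batches A q \<and> y11 = y21 \<and>
             d_pm A y11 y12 \<le> 2 \<and> d_pm A y11 y22 \<le> 2 \<and> d_pm A y12 y22 \<le> 2}))"
proof -
  obtain a a' where "a \<in> x" "a' \<in> A" "a' \<notin> x" "x' = insert a' (x - {a})"
    using assms(6) unfolding subst_rel_def by auto
  define X where "X = x - {a}"
  have X: "x = insert a X" "x' = insert a' X" "a \<notin> X" "a' \<notin> X" "insert a X \<subseteq> A" "insert a' X \<subseteq> A"
    using \<open>a \<in> x\<close> \<open>a' \<in> A\<close> \<open>a' \<notin> x\<close> \<open>x' = insert a' (x - {a})\<close> assms(4) by (auto simp: X_def)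
  define w where "w = real q / real (card x)"
  define C where "C = {(y11, y12, y21, y22). y11 \<in> batches A q \<and> y12 \<in> batches A q \<and>
             y21 \<in> batches A q \<and> y22 \<in> batches A q \<and> y11 = y21 \<and>
             d_pm A y11 y12 \<le> 2 \<and> d_pm A y11 y22 \<le> 2 \<and> d_pm A y12 y22 \<le> 2}"
  define H where "H = (\<lambda>(y11, y12, y21, y22). renyi_lambda \<alpha>
              (\<lambda>z. (1 - w) * b y11 z + w * b y12 z)
              (\<lambda>z. (1 - w) * b y21 z + w * b y22 z))"
  have "finite C"
    by (rule finite_subset[of _ "batches A q \<times> batches A q \<times> batches A q \<times> batches A q"])
       (auto simp: C_def finite_batches assms(1))
  then have le_Max: "H c \<le> Max (H ` C)" if "c \<in> C" for c
    using that by simp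
  have "renyi_lambda \<alpha> (mech_density A q b x) (mech_density A q b x') \<le> Max (H ` C)"
  proof (cases "q = 0")
    case True
    then have "H ({}, {}, {}, {}) \<le> Max (H ` C)"
      by (intro le_Max) (simp add: C_def batches_def d_pm_self)
    then show ?thesis
      using True X assms(1) by (simp add: H_def w_def mech_density_batch_size_0)
  next
    case False
    have "card x = Suc (card X)"
      using X(1,3,5) assms(1) finite_subset[of X A] by simp
    have "H (y, insert a (y - {t}), y, insert a' (y - {t})) \<le> Max (H ` C)"
      if "(y, t) \<in> pointed_batches X q" for y t
    proof (intro le_Max)
      have "y \<subseteq> X"
        using that by (simp add: pointed_batches_def batches_def)
      then have "d_pm A (insert a (y - {t})) (insert a' (y - {t})) \<le> 2"
        using X by (intro d_pm_insert_insert_le_2) auto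
      then show "(y, insert a (y - {t}), y, insert a' (y - {t})) \<in> C"
        using pointed_batches_swap[OF that X(5,3)] pointed_batches_swap[OF that X(6,4)]
        by (simp add: C_def)
    qed
    then show ?thesis
      unfolding X(1,2) using assms(2,3,5) False \<open>card x = Suc (card X)\<close>
      by (intro renyi_lambda_mech_density_subst_le[OF assms(1)] X(3-6))
        (auto simp: H_def w_def X(1))
  qed
  then show ?thesis
    unfolding Let_def w_def[symmetric] H_def[symmetric] C_def[symmetric] .
qed

end
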